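(* Let $0<t_1<t_2<t_3<t_4<t_5$ be real numbers and let $p_i=(t_i,t_i^2,t_i^3,t_i^4)\in\mathbb{R}^4$ for $1\le i\le 5$. Then the unique $3$-sphere in $\mathbb{R}^4$ passing through $p_1,\dots,p_5$ has the following property: for every $t\in(t_1,t_2)\cup(t_3,t_4)\cup(t_5,\infty)$, the point $(t,t^2,t^3,t^4)$ lies strictly outside the sphere, i.e., its distance from the center of the sphere is strictly greater than the radius.
   Context: The moment curve in $\mathbb{R}^d$ is the curve $t\mapsto(t,t^2,\dots,t^d)$ for $t>0$. A $3$-sphere in $\mathbb{R}^4$ is the set of points at a fixed distance (the radius) from a fixed point (the center). *)

theory Defs
  imports "HOL-Analysis.Analysis"
begin

definition moment_curve4 :: "real \<Rightarrow> real^4" where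
  "moment_curve4 t = vector [t, t^2, t^3, t^4]"

end

theory Submission
  imports Defs
begin

text \<open>For a centre \<open>c\<close>, the squared distance \<open>|\<gamma>(t) - c|\<^sup>2\<close> from the moment curve
  \<open>\<gamma>(t) = (t, t\<^sup>2, t\<^sup>3, t\<^sup>4)\<close> is \<open>t\<^sup>8 + t\<^sup>6\<close> plus a polynomial of degree at most 4 whose
  coefficients determine \<open>c\<close> and \<open>|c|\<^sup>2\<close>. Hence two spheres through five points of the curve
  coincide, since the difference of their equations has degree at most 4 and five roots. For
  existence, multiply \<open>(t - t\<^sub>1)\<cdots>(t - t\<^sub>5)\<close> by the unique monic cubic \<open>g\<close> making the product
  of the shape \<open>t\<^sup>8 + t\<^sup>6 + (degree \<le> 4)\<close>; this product is \<open>|\<gamma>(t) - c|\<^sup>2 - r\<^sup>2\<close> for a suitable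
  sphere. The coefficients of \<open>g\<close> are positive when all \<open>t\<^sub>i\<close> are, so for \<open>t > 0\<close> the sign of
  \<open>|\<gamma>(t) - c|\<^sup>2 - r\<^sup>2\<close> is that of \<open>(t - t\<^sub>1)\<cdots>(t - t\<^sub>5)\<close>, positive exactly on the three
  intervals.\<close>

lemma moment_curve4_nth [simp]:
  "moment_curve4 t $ 1 = t" "moment_curve4 t $ 2 = t^2"
  "moment_curve4 t $ 3 = t^3" "moment_curve4 t $ 4 = t^4"
  by (simp_all add: moment_curve4_def vector_def eval_nat_numeral)

lemma inj_moment_curve4: "inj moment_curve4"
  by (rule injI) (metis moment_curve4_nth(1))

lemma dist_moment_curve4_power2:
  "(dist c (moment_curve4 t))^2
     = t^2 + t^4 + t^6 + t^8 - 2 * (c$1*t + c$2*t^2 + c$3*t^3 + c$4*t^4) + (norm c)^2"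
  unfolding dist_norm power2_norm_eq_inner inner_vec_def sum_4
  by (simp add: power2_eq_square algebra_simps eval_nat_numeral)

lemma polyfun_eq_0_if_card_roots_gt:
  fixes a :: "nat \<Rightarrow> 'a::{idom,real_normed_div_algebra}"
  assumes "n < card A" and "\<And>x. x \<in> A \<Longrightarrow> (\<Sum>i\<le>n. a i * x^i) = 0"
    and "i \<le> n"
  shows "a i = 0"
proof (rule ccontr)
  assume "a i \<noteq> 0"
  with assms(3) have "finite {x. (\<Sum>i\<le>n. a i * x^i) = 0}" "card {x. (\<Sum>i\<le>n. a i * x^i) = 0} \<le> n"
    using polyfun_rootbound by blast+
  moreover have "A \<subseteq> {x. (\<Sum>i\<le>n. a i * x^i) = 0}" using assms(2) by blast
  ultimately have "card A \<le> n" by (meson card_mono order_trans)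
  with assms(1) show False by simp
qed

lemma moment_curve4_sphere_unique:
  assumes "4 < card T"
    and "moment_curve4 ` T \<subseteq> sphere c r" "moment_curve4 ` T \<subseteq> sphere c' r'"
    and "0 \<le> r" "0 \<le> r'"
  shows "c = c' \<and> r = r'"
proof -
  \<comment> \<open>the terms \<open>t\<^sup>8\<close>, \<open>t\<^sup>6\<close> cancel in the difference of the two sphere equations\<close>
  define a where "a = (\<lambda>i. [(norm c)^2 - r^2 - (norm c')^2 + r'^2,
     2 * (c'$1 - c$1), 2 * (c'$2 - c$2), 2 * (c'$3 - c$3), 2 * (c'$4 - c$4)] ! i)"
  have roots: "(\<Sum>i\<le>4. a i * x^i) = 0" if "x \<in> T" for x
  proof -
    have "(dist c (moment_curve4 x))^2 - r^2 = 0" "(dist c' (moment_curve4 x))^2 - r'^2 = 0"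
      using that assms(2,3) by auto
    then show ?thesis
      unfolding dist_moment_curve4_power2 by (simp add: a_def eval_nat_numeral algebra_simps)
  qed
  have a0: "a i = 0" if "i \<le> 4" for i
    using polyfun_eq_0_if_card_roots_gt[OF assms(1) roots that] .
  have "c = c'"
    using a0[of 1] a0[of 2] a0[of 3] a0[of 4] by (simp add: a_def vec_eq_iff forall_4)
  moreover from this a0[of 0] have "r^2 = r'^2" by (simp add: a_def)
  ultimately show ?thesis using assms(4,5) by (simp add: power2_eq_iff_nonneg)
qed

lemma quintic_cubic_cofactor:
  fixes t1 t2 t3 t4 t5 :: real
  assumes "0 < t1" "0 < t2" "0 < t3" "0 < t4" "0 < t5"
  obtains g :: "real \<Rightarrow> real" and q0 q1 q2 q3 q4 :: real
  where "\<And>t. (t-t1)*(t-t2)*(t-t3)*(t-t4)*(t-t5) * g t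
               = q0 + q1*t + q2*t^2 + q3*t^3 + q4*t^4 + t^6 + t^8"
    and "\<And>t. 0 < t \<Longrightarrow> 0 < g t"
proof -
  define e1 where "e1 = t1+t2+t3+t4+t5"
  define e2 where "e2 = t1*t2+t1*t3+t1*t4+t1*t5+t2*t3+t2*t4+t2*t5+t3*t4+t3*t5+t4*t5"
  define e3 where "e3 = t1*t2*t3+t1*t2*t4+t1*t2*t5+t1*t3*t4+t1*t3*t5+t1*t4*t5
                        +t2*t3*t4+t2*t3*t5+t2*t4*t5+t3*t4*t5"
  define e4 where "e4 = t1*t2*t3*t4+t1*t2*t3*t5+t1*t2*t4*t5+t1*t3*t4*t5+t2*t3*t4*t5"
  define e5 where "e5 = t1*t2*t3*t4*t5"
  \<comment> \<open>the coefficients \<open>e1, b1, b0\<close> of \<open>g\<close> are forced by requiring the coefficients of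
    \<open>t\<^sup>7, t\<^sup>6, t\<^sup>5\<close> in the product to be \<open>0, 1, 0\<close>\<close>
  define b1 where "b1 = 1 + e1^2 - e2"
  define b0 where "b0 = e1*b1 - e1*e2 + e3"
  define g where "g t = t^3 + e1*t^2 + b1*t + b0" for t :: real
  have vieta: "(t-t1)*(t-t2)*(t-t3)*(t-t4)*(t-t5) = t^5 - e1*t^4 + e2*t^3 - e3*t^2 + e4*t - e5"
    for t :: real
    unfolding e1_def e2_def e3_def e4_def e5_def by (simp add: algebra_simps eval_nat_numeral)
  show ?thesis
  proof (rule that)
    show "(t-t1)*(t-t2)*(t-t3)*(t-t4)*(t-t5) * g t
        = - e5*b0 + (e4*b0 - e5*b1)*t + (e4*b1 - e3*b0 - e1*e5)*t^2
          + (e2*b0 - e3*b1 + e1*e4 - e5)*t^3 + (e4 - e1*b0 + e2*b1 - e1*e3)*t^4 + t^6 + t^8" for t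
      unfolding vieta g_def b0_def b1_def by (simp add: algebra_simps eval_nat_numeral)
  next
    have "e1^2 = t1^2+t2^2+t3^2+t4^2+t5^2 + 2*e2"
      unfolding e1_def e2_def by (simp add: algebra_simps power2_eq_square)
    moreover have "0 < e1" "0 < e2" "0 < e3"
      unfolding e1_def e2_def e3_def using assms by (simp_all add: add_pos_pos)
    ultimately have "0 < b1" "0 < b0"
      unfolding b0_def b1_def by (auto simp: algebra_simps add_pos_nonneg)
    then show "0 < g t" if "0 < t" for t
      unfolding g_def using that \<open>0 < e1\<close> by (simp add: add_pos_pos)
  qed
qed

lemma moment_curve4_sphere_factorization:
  fixes t1 t2 t3 t4 t5 :: real
  assumes "0 < t1" "t1 < t2" "t2 < t3" "t3 < t4" "t4 < t5"
  obtains c r and g :: "real \<Rightarrow> real"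
  where "\<And>t. (dist c (moment_curve4 t))^2 = r^2 + (t-t1)*(t-t2)*(t-t3)*(t-t4)*(t-t5) * g t"
    and "0 < r"
    and "\<And>t. 0 < t \<Longrightarrow> 0 < g t"
proof -
  obtain g q0 q1 q2 q3 q4 where factor: "\<And>t. (t-t1)*(t-t2)*(t-t3)*(t-t4)*(t-t5) * g t
               = q0 + q1*t + q2*t^2 + q3*t^3 + q4*t^4 + t^6 + t^8"
    and g_pos: "\<And>t. 0 < t \<Longrightarrow> 0 < g t"
  proof -
    have "0 < t2" "0 < t3" "0 < t4" "0 < t5" using assms by linarith+
    then show thesis using that by (rule quintic_cubic_cofactor[OF assms(1)])
  qed
  define c :: "real^4" where "c = vector [-q1/2, (1-q2)/2, -q3/2, (1-q4)/2]"
  have c_nth: "c$1 = -q1/2" "c$2 = (1-q2)/2" "c$3 = -q3/2" "c$4 = (1-q4)/2"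
    by (simp_all add: c_def vector_def)
  have dist_factor: "(dist c (moment_curve4 t))^2
      = ((norm c)^2 - q0) + (t-t1)*(t-t2)*(t-t3)*(t-t4)*(t-t5) * g t" for t
    unfolding factor dist_moment_curve4_power2 c_nth by (simp add: field_simps)
  define r where "r = dist c (moment_curve4 t1)"
  have dist_eq: "(dist c (moment_curve4 t))^2 = r^2 + (t-t1)*(t-t2)*(t-t3)*(t-t4)*(t-t5) * g t"
    for t
    using dist_factor[of t] dist_factor[of t1] by (simp add: r_def)
  have "0 < r"
  proof (rule ccontr)
    assume "\<not> 0 < r"
    then have "dist c (moment_curve4 t1) = 0" "dist c (moment_curve4 t2) = 0"
      using dist_eq[of t2] by (auto simp: r_def)
    then have "moment_curve4 t1 = moment_curve4 t2" by simp
    with assms(2) show False by (simp add: inj_eq[OF inj_moment_curve4])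
  qed
  show ?thesis by (rule that[OF dist_eq \<open>0 < r\<close> g_pos])
qed

lemma prod_diff_five_pos:
  fixes t t1 t2 t3 t4 t5 :: real
  assumes "t1 < t2" "t2 < t3" "t3 < t4" "t4 < t5"
    and "t \<in> {t1<..<t2} \<union> {t3<..<t4} \<union> {t5<..}"
  shows "0 < (t-t1)*(t-t2)*(t-t3)*(t-t4)*(t-t5)"
proof -
  consider "t1 < t" "t < t2" | "t3 < t" "t < t4" | "t5 < t"
    using assms(5) by auto
  then show ?thesis
  proof cases
    case 1
    then have "(t-t1)*(t-t2) < 0" by (simp add: mult_pos_neg)
    with 1 assms have "(t-t1)*(t-t2)*(t-t3)*(t-t4) < 0"
      by (simp add: mult_neg_neg mult_pos_neg)
    with 1 assms show ?thesis by (simp add: mult_neg_neg)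
  next
    case 2
    with assms have "0 < (t-t1)*(t-t2)*(t-t3)" by simp
    with 2 assms have "(t-t1)*(t-t2)*(t-t3)*(t-t4) < 0" by (simp add: mult_pos_neg)
    with 2 assms show ?thesis by (simp add: mult_neg_neg)
  next
    case 3
    with assms show ?thesis by simp
  qed
qed

theorem mainTheorem6:
  fixes t1 t2 t3 t4 t5 :: real
  assumes "0 < t1" "t1 < t2" "t2 < t3" "t3 < t4" "t4 < t5"
  defines "P \<equiv> {moment_curve4 t1, moment_curve4 t2, moment_curve4 t3,
                  moment_curve4 t4, moment_curve4 t5}"
  shows "(\<exists>!(c, r). r > 0 \<and> P \<subseteq> sphere c r) \<and>
         (\<forall>c r. r > 0 \<and> P \<subseteq> sphere c r \<longrightarrow>
            (\<forall>t \<in> {t1<..<t2} \<union> {t3<..<t4} \<union> {t5<..}.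
               dist c (moment_curve4 t) > r))"
proof -
  define T where "T = {t1, t2, t3, t4, t5}"
  have P_eq: "P = moment_curve4 ` T" and card_T: "4 < card T"
    using assms by (auto simp: P_def T_def)
  obtain c0 r0 g where dist_eq: "\<And>t. (dist c0 (moment_curve4 t))^2
                                       = r0^2 + (t-t1)*(t-t2)*(t-t3)*(t-t4)*(t-t5) * g t"
    and "0 < r0"
    and g_pos: "\<And>t. 0 < t \<Longrightarrow> 0 < g t"
    using moment_curve4_sphere_factorization[OF assms(1-5)] by blast
  have "(dist c0 (moment_curve4 x))^2 = r0^2" if "x \<in> T" for x
    using that dist_eq[of x] by (auto simp: T_def)
  then have on_sphere: "P \<subseteq> sphere c0 r0"
    using \<open>0 < r0\<close> by (auto simp: P_eq power2_eq_iff_nonneg)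
  have unique: "c = c0 \<and> r = r0" if "0 < r" "P \<subseteq> sphere c r" for c r
    using moment_curve4_sphere_unique[OF card_T, of c r c0 r0] that on_sphere \<open>0 < r0\<close>
    unfolding P_eq by simp
  show ?thesis
  proof (intro conjI allI impI ballI)
    show "\<exists>!(c, r). r > 0 \<and> P \<subseteq> sphere c r"
    proof (rule ex1I[of _ "(c0, r0)"])
      fix y
      assume "case y of (c, r) \<Rightarrow> r > 0 \<and> P \<subseteq> sphere c r"
      then show "y = (c0, r0)" using unique by (cases y) fastforce
    qed (use on_sphere \<open>0 < r0\<close> in simp)
  next
    fix c r t
    assume "0 < r \<and> P \<subseteq> sphere c r" and t: "t \<in> {t1<..<t2} \<union> {t3<..<t4} \<union> {t5<..}"
    then have "c = c0" "r = r0" using unique by auto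
    have "0 < (t-t1)*(t-t2)*(t-t3)*(t-t4)*(t-t5) * g t"
      using prod_diff_five_pos[OF assms(2-5) t] g_pos[of t] t assms by auto
    then have "r^2 < (dist c (moment_curve4 t))^2"
      using dist_eq[of t] \<open>c = c0\<close> \<open>r = r0\<close> by simp
    then show "r < dist c (moment_curve4 t)"
      by (simp add: power2_less_imp_less)
  qed
qed

end
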